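(* Let $k\ge1$ and $0\le r<k$ be integers. Then for every $n\ge1$, $$\sum_{j=0}^n(-1)^j\begin{bmatrix} r+1\\ j\end{bmatrix}_q q^{nkj+\binom{j}{2}-k\binom{j+1}{2}}F^{(k)}_{k(n-j)+r}(x;q)=x^{r+1}F^{(k)}_{kn-1}(x;q),$$ and for every $n\ge1$ and every integer $i$ with $0<i<k+n$, $$\sum_{j=0}^{n-1}(-1)^{n-1-j}\begin{bmatrix} i-k+r\\ n-1-j\end{bmatrix}_q x^k q^{\binom{n-j-1}{2}-k\binom{n-j}{2}+(n-j-1)(kn-i+1)}F^{(k)}_{kj+r}(x;q)=x^{r+i}F^{(k)}_{kn-i}(x;q).$$
   Context: Here $q$ is an indeterminate and all quantities lie in $\mathbb{Q}(q)[x]$. The $q$-binomial coefficient is defined for integers $m$ (possibly negative) and $j$ by $\begin{bmatrix} m\\ j\end{bmatrix}_q=\prod_{t=0}^{j-1}\frac{1-q^{m-t}}{1-q^{t+1}}$ if $j\ge0$ and $0$ if $j<0$. For an integer $k\ge1$, the $q$-Fibonacci polynomials $F^{(k)}_n(x;q)$ ($n\ge0$) are defined by $F^{(k)}_n(x;q)=x^n$ for $0\le n<k$ and $F^{(k)}_{n+k}(x;q)=xF^{(k)}_{n+k-1}(x;q)+q^nF^{(k)}_n(x;q)$ for $n\ge0$. *)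

theory Defs
  imports "HOL-Computational_Algebra.Polynomial" "HOL-Computational_Algebra.Fraction_Field"
begin

text \<open>The indeterminate q as an element of the field Q(q) = fraction field of rat poly.\<close>
definition qq :: "rat poly fract" where
  "qq = Fract [:0, 1:] 1"

definition qbinom :: "'a::field \<Rightarrow> int \<Rightarrow> int \<Rightarrow> 'a" where
  "qbinom q m j = (if j < 0 then 0 else
     (\<Prod>t<nat j. (1 - q powi (m - int t)) / (1 - q ^ (t + 1))))"

text \<open>q-Fibonacci polynomials F^(k)_m(x;q) (the case k = 0 is junk and never used).\<close>
function qfib :: "'a::comm_ring_1 \<Rightarrow> nat \<Rightarrow> nat \<Rightarrow> 'a poly" where
  "qfib q k m = (if k = 0 \<or> m < k then monom 1 m
     else pCons 0 (qfib q k (m - 1)) + smult (q ^ (m - k)) (qfib q k (m - k)))"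
  by auto
termination by (relation "measure (\<lambda>(q, k, m). m)") auto

end

theory Submission
  imports Defs
begin

text \<open>
  Write \<open>L(n, i)\<close> for the left-hand side of the second identity and \<open>R(n, i) = x^(r+i) F_(kn-i)\<close>.
  The q-Pascal rule for the coefficients and the defining recurrence of \<open>F\<close> give the same
  recurrence \<open>X(n, i) = X(n, i-1) - q^(k(n-1)-i+1) X(n-1, i-1)\<close> for \<open>X = L\<close> and \<open>X = R\<close>.
  So \<open>L = R\<close> follows by induction on \<open>n\<close>, and for fixed \<open>n\<close> by induction on \<open>i\<close> upwards and
  downwards from \<open>i = k - r\<close>, where all q-binomials with top entry \<open>0\<close> vanish and only the
  term \<open>j = n - 1\<close> survives. The first identity is the case \<open>(n+1, k+1)\<close> of the second,
  with the summation reversed and the common factor \<open>x^k\<close> cancelled.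
\<close>

declare qfib.simps [simp del]

lemma qfib_less: "m < k \<Longrightarrow> qfib q k m = monom 1 m"
  by (subst qfib.simps) simp

lemma qfib_rec:
  assumes "1 \<le> k" "k \<le> m"
  shows "qfib q k m = monom 1 1 * qfib q k (m - 1) + smult (q ^ (m - k)) (qfib q k (m - k))"
  using assms by (subst qfib.simps) (simp add: monom_Suc monom_0)

lemma qbinom_of_nat:
  "qbinom q m (int l) = (\<Prod>t<l. 1 - q powi (m - int t)) / (\<Prod>t<l. 1 - q ^ (t + 1))"
  by (simp add: qbinom_def prod_dividef)

lemma qbinom_0_right [simp]: "qbinom q m 0 = 1"
  by (simp add: qbinom_def)

lemma qbinom_0_left: "1 \<le> l \<Longrightarrow> qbinom q 0 (int l) = 0"
proof -
  assume "1 \<le> l"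
  hence "(\<Prod>t<l. 1 - q powi (0 - int t)) = 0"
    by (intro prod_zero bexI[of _ 0]) auto
  thus ?thesis by (simp only: qbinom_of_nat) simp
qed

lemma choose_two_Suc: "Suc a choose 2 = (a choose 2) + a"
  using binomial_Suc_Suc[of a 1] by (simp add: numeral_2_eq_2)

text \<open>
  \<open>qfib_lincomb\<close> and \<open>qfib_shifted\<close> are \<open>L\<close> and \<open>R\<close>. The coefficient of the \<open>j\<close>-th term is
  indexed by \<open>l = n - 1 - j\<close>, which makes the q-Pascal recurrence uniform in \<open>l\<close>.
\<close>

definition qfib_coeff :: "'a::field \<Rightarrow> nat \<Rightarrow> nat \<Rightarrow> nat \<Rightarrow> int \<Rightarrow> nat \<Rightarrow> 'a" where
  "qfib_coeff q k r n i l = (-1) ^ l * qbinom q (i - int k + int r) (int l)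
     * q powi (int (l choose 2) - int k * int (Suc l choose 2) + int l * (int k * int n - i + 1))"

lemma qfib_coeff_0 [simp]: "qfib_coeff q k r n i 0 = 1"
  by (simp add: qfib_coeff_def binomial_eq_0)

definition qfib_lincomb :: "'a::field \<Rightarrow> nat \<Rightarrow> nat \<Rightarrow> nat \<Rightarrow> int \<Rightarrow> 'a poly" where
  "qfib_lincomb q k r n i =
     (\<Sum>j<n. smult (qfib_coeff q k r n i (n - 1 - j)) (monom 1 k * qfib q k (k * j + r)))"

definition qfib_shifted :: "'a::field \<Rightarrow> nat \<Rightarrow> nat \<Rightarrow> nat \<Rightarrow> int \<Rightarrow> 'a poly" where
  "qfib_shifted q k r n i = monom 1 (nat (int r + i)) * qfib q k (nat (int k * int n - i))"

lemma qfib_shifted_step: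
  assumes "1 \<le> k" "2 \<le> n" "2 \<le> i" "i < int k + int n"
  shows "qfib_shifted q k r n (i - 1) = qfib_shifted q k r n i
           + smult (q powi (int k * (int n - 1) - i + 1)) (qfib_shifted q k r (n - 1) (i - 1))"
proof -
  have "0 \<le> (int k - 1) * (int n - 2)" using assms by simp
  hence i_le: "i \<le> int k * (int n - 1) + 1" using assms by (simp add: algebra_simps)
  define M where "M = nat (int k * int n - i + 1)"
  have "k \<le> M" using i_le unfolding M_def by (simp add: algebra_simps)
  hence rec: "qfib q k M = monom 1 1 * qfib q k (M - 1) + smult (q ^ (M - k)) (qfib q k (M - k))"
    using qfib_rec assms(1) by blast
  have "int (M - k) = int k * (int n - 1) - i + 1"
    using \<open>k \<le> M\<close> i_le unfolding M_def by (simp add: algebra_simps)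
  hence pow: "q ^ (M - k) = q powi (int k * (int n - 1) - i + 1)"
    by (metis power_int_of_nat)
  have idx: "nat (int k * int n - (i - 1)) = M" "nat (int k * int n - i) = M - 1"
    "nat (int k * int (n - 1) - (i - 1)) = M - k"
    using i_le \<open>k \<le> M\<close> assms(2) unfolding M_def by (simp_all add: algebra_simps nat_diff_distrib)
  have "nat (int r + i) = nat (int r + (i - 1)) + 1" using assms by simp
  hence x_pow: "monom 1 (nat (int r + (i - 1))) * monom 1 1 = (monom 1 (nat (int r + i)) :: 'a poly)"
    by (simp add: mult_monom)
  show ?thesis
    unfolding qfib_shifted_def idx rec pow[symmetric] distrib_left mult.assoc[symmetric] x_pow
      mult_smult_right ..
qed

lemma qfib_lincomb_1:
  assumes "r < k" "0 < i" "i \<le> int k"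
  shows "qfib_lincomb q k r 1 i = qfib_shifted q k r 1 i"
proof -
  have "nat (int r + i) + nat (int k - i) = k + r" using assms by auto
  moreover have "nat (int k - i) < k" using assms by auto
  ultimately show ?thesis
    using assms unfolding qfib_lincomb_def qfib_shifted_def by (simp add: qfib_less mult_monom)
qed

lemma qfib_lincomb_k_minus_r:
  assumes "r < k" "1 \<le> n"
  shows "qfib_lincomb q k r n (int k - int r) = qfib_shifted q k r n (int k - int r)"
proof -
  have "qfib_coeff q k r n (int k - int r) l = 0" if "1 \<le> l" for l
    using qbinom_0_left[OF that, of q] by (simp add: qfib_coeff_def)
  hence "qfib_lincomb q k r n (int k - int r) =
      (\<Sum>j<n. if j = n - 1 then monom 1 k * qfib q k (k * j + r) else 0)"
    unfolding qfib_lincomb_def by (intro sum.cong) auto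
  also have "\<dots> = monom 1 k * qfib q k (k * (n - 1) + r)"
    using assms by simp
  also have "\<dots> = qfib_shifted q k r n (int k - int r)"
  proof -
    have "int (n - 1) = int n - 1" using assms by simp
    hence idx: "int k * int n - (int k - int r) = int (k * (n - 1) + r)"
      unfolding of_nat_add of_nat_mult by (simp add: algebra_simps)
    show ?thesis unfolding qfib_shifted_def idx nat_int using assms by simp
  qed
  finally show ?thesis .
qed

context
  fixes q :: "'a::field"
  assumes q_nonzero: "q \<noteq> 0"
    and q_not_root_of_unity: "\<And>t. 0 < t \<Longrightarrow> q ^ t \<noteq> 1"
begin

lemma qbinom_pascal:
  assumes "1 \<le> l"
  shows "qbinom q m (int l) = q ^ l * qbinom q (m - 1) (int l) + qbinom q (m - 1) (int l - 1)"
proof -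
  obtain l0 where l: "l = Suc l0" using assms by (cases l) auto
  define N where "N = (\<Prod>t<l0. 1 - q powi (m - 1 - int t))"
  define D where "D = (\<Prod>t<l0. 1 - q ^ (t + 1))"
  have "(\<Prod>t<l. 1 - q powi (m - int t)) = (1 - q powi m) * N"
    unfolding N_def l prod.lessThan_Suc_shift by (simp add: diff_diff_eq)
  moreover have "(\<Prod>t<l. 1 - q powi (m - 1 - int t)) = N * (1 - q powi (m - int l))"
    unfolding N_def l by (simp add: diff_diff_eq)
  moreover have "(\<Prod>t<l. 1 - q ^ (t + 1)) = D * (1 - q ^ l)"
    unfolding D_def l by simp
  ultimately have top: "qbinom q m (int l) = (1 - q powi m) * N / (D * (1 - q ^ l))"
    and left: "qbinom q (m - 1) (int l) = N * (1 - q powi (m - int l)) / (D * (1 - q ^ l))"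
    by (simp_all only: qbinom_of_nat)
  have right: "qbinom q (m - 1) (int l - 1) = N / D"
    using qbinom_of_nat[of q "m - 1" l0] l unfolding N_def D_def by simp
  have "q ^ l * q powi (m - int l) = q powi (int l + (m - int l))"
    using q_nonzero by (subst power_int_add) simp_all
  hence "q ^ l * q powi (m - int l) = q powi m" by simp
  moreover have "1 - q ^ l \<noteq> 0" using q_not_root_of_unity assms by simp
  ultimately show ?thesis
    unfolding top left right by (cases "D = 0") (simp_all add: field_simps)
qed

lemma qfib_coeff_step:
  assumes "1 \<le> l" "1 \<le> n"
  shows "qfib_coeff q k r n i l = qfib_coeff q k r n (i - 1) l
           - q powi (int k * (int n - 1) - i + 1) * qfib_coeff q k r (n - 1) (i - 1) (l - 1)"
proof -
  obtain l0 where l: "l = Suc l0" using assms by (cases l) auto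
  define m where "m = i - int k + int r"
  define e where "e = int (l choose 2) - int k * int (Suc l choose 2) + int l * (int k * int n - i + 1)"
  define c where "c = int k * (int n - 1) - i + 1"
  define e' where
    "e' = int (l0 choose 2) - int k * int (l choose 2) + int l0 * (int k * int (n - 1) - (i - 1) + 1)"
  have m_pred: "i - 1 - int k + int r = m - 1" unfolding m_def by simp
  have "int (l choose 2) - int k * int (Suc l choose 2) + int l * (int k * int n - (i - 1) + 1) = e + int l"
    unfolding e_def by (simp add: algebra_simps)
  hence "q powi (int (l choose 2) - int k * int (Suc l choose 2) + int l * (int k * int n - (i - 1) + 1))
      = q powi e * q ^ l"
    using q_nonzero by (simp only:) (subst power_int_add; simp)
  then have coeff_pred_i:
    "qfib_coeff q k r n (i - 1) l = (-1) ^ l * qbinom q (m - 1) (int l) * (q powi e * q ^ l)"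
    unfolding qfib_coeff_def m_pred by (simp only:)
  have coeff_pred_n:
    "qfib_coeff q k r (n - 1) (i - 1) (l - 1) = (-1) ^ l0 * qbinom q (m - 1) (int l0) * q powi e'"
    unfolding qfib_coeff_def e'_def m_pred l by simp
  have "c + e' = e"
    using assms unfolding c_def e'_def e_def l choose_two_Suc of_nat_add of_nat_Suc of_nat_diff[OF assms(2)]
    by (simp add: algebra_simps)
  hence e_split: "q powi e = q powi c * q powi e'"
    using q_nonzero by (metis power_int_add)
  moreover have "qbinom q m (int l) = q ^ l * qbinom q (m - 1) (int l) + qbinom q (m - 1) (int l0)"
    using qbinom_pascal[OF assms(1), of m] l by (simp only: of_nat_Suc add_diff_cancel_left')
  ultimately have coeff: "qfib_coeff q k r n i l =
      (-1) ^ l * (q ^ l * qbinom q (m - 1) (int l) + qbinom q (m - 1) (int l0)) * (q powi c * q powi e')"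
    unfolding qfib_coeff_def m_def e_def by (simp only:)
  have sign: "(-1 :: 'a) ^ l = - ((-1) ^ l0)" using l by simp
  show ?thesis
    unfolding coeff coeff_pred_i coeff_pred_n c_def[symmetric] e_split sign by (simp add: algebra_simps)
qed

lemma qfib_lincomb_step:
  assumes "2 \<le> n"
  shows "qfib_lincomb q k r n i = qfib_lincomb q k r n (i - 1)
           - smult (q powi (int k * (int n - 1) - i + 1)) (qfib_lincomb q k r (n - 1) (i - 1))"
proof -
  obtain n' where n: "n = Suc n'" using assms by (cases n) auto
  hence n_pred: "n - 1 = n'" by simp
  define c where "c = q powi (int k * (int n - 1) - i + 1)"
  define X where "X j = monom 1 k * qfib q k (k * j + r)" for j
  have split:
    "qfib_lincomb q k r n i' = (\<Sum>j<n'. smult (qfib_coeff q k r n i' (n' - j)) (X j)) + X n'" for i'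
    unfolding qfib_lincomb_def X_def n by simp
  have "smult (qfib_coeff q k r n i (n' - j)) (X j) =
          smult (qfib_coeff q k r n (i - 1) (n' - j)) (X j)
          - smult c (smult (qfib_coeff q k r n' (i - 1) (n' - 1 - j)) (X j))"
    if "j < n'" for j
  proof -
    have "1 \<le> n' - j" "1 \<le> n" using that n by simp_all
    hence "qfib_coeff q k r n i (n' - j) =
        qfib_coeff q k r n (i - 1) (n' - j) - c * qfib_coeff q k r n' (i - 1) (n' - 1 - j)"
      using qfib_coeff_step[of "n' - j" n k r i] n_pred unfolding c_def diff_commute[of n' j] by simp
    thus ?thesis by (simp only: smult_diff_left smult_smult)
  qed
  hence "(\<Sum>j<n'. smult (qfib_coeff q k r n i (n' - j)) (X j)) =
         (\<Sum>j<n'. smult (qfib_coeff q k r n (i - 1) (n' - j)) (X j))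
         - smult c (qfib_lincomb q k r n' (i - 1))"
    unfolding qfib_lincomb_def X_def[symmetric]
    by (simp add: sum_subtractf sum_distrib_left[of "[:c:]", simplified])
  thus ?thesis unfolding split c_def[symmetric] n_pred by (simp only: diff_add_eq)
qed

lemma qfib_lincomb_eq_shifted_iff_pred:
  assumes "1 \<le> k" "2 \<le> n" "2 \<le> i" "i < int k + int n"
    and "qfib_lincomb q k r (n - 1) (i - 1) = qfib_shifted q k r (n - 1) (i - 1)"
  shows "qfib_lincomb q k r n i = qfib_shifted q k r n i \<longleftrightarrow>
         qfib_lincomb q k r n (i - 1) = qfib_shifted q k r n (i - 1)"
  using qfib_lincomb_step[OF assms(2), of k r i] qfib_shifted_step[OF assms(1-4), of q r] assms(5)
  by (auto simp: algebra_simps)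

lemma qfib_lincomb_eq_shifted:
  assumes "1 \<le> k" "r < k" "1 \<le> n" "0 < i" "i < int k + int n"
  shows "qfib_lincomb q k r n i = qfib_shifted q k r n i"
  using assms(3-5)
proof (induction n arbitrary: i rule: nat_induct_at_least)
  case base
  thus ?case using qfib_lincomb_1 assms(2) by simp
next
  case (Suc n)
  have "0 < i \<and> i < int k + int (Suc n) \<longrightarrow>
      qfib_lincomb q k r (Suc n) i = qfib_shifted q k r (Suc n) i"
  proof (induction i rule: int_induct[where k = "int k - int r"])
    case base
    show ?case using qfib_lincomb_k_minus_r[OF assms(2), of "Suc n" q] by simp
  next
    case (step1 i)
    thus ?case
      using qfib_lincomb_eq_shifted_iff_pred[OF assms(1), of "Suc n" "i + 1" r] Suc.IH[of i] Suc.hyps assms(2)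
      by auto
  next
    case (step2 i)
    thus ?case
      using qfib_lincomb_eq_shifted_iff_pred[OF assms(1), of "Suc n" i r] Suc.IH[of "i - 1"] Suc.hyps
      by auto
  qed
  thus ?case using Suc.prems by blast
qed

lemma qfib_sum_eq_monom_mult_qfib:
  assumes "1 \<le> k" "r < k" "1 \<le> n" "0 < i" "i < int k + int n"
  shows "(\<Sum>j=0..n-1. smult ((-1) ^ (n - 1 - j) * qbinom q (i - int k + int r) (int (n - 1 - j))
              * q powi (int ((n - j - 1) choose 2) - int k * int ((n - j) choose 2)
                         + int (n - j - 1) * (int k * int n - i + 1)))
              (monom 1 k * qfib q k (k * j + r)))
         = monom 1 (nat (int r + i)) * qfib q k (nat (int k * int n - i))"
proof -
  have "{0..n-1} = {..<n}" using assms(3) by auto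
  moreover have "n - j - 1 = n - 1 - j" "n - j = Suc (n - 1 - j)" if "j < n" for j
    using that by simp_all
  ultimately have "(\<Sum>j=0..n-1. smult ((-1) ^ (n - 1 - j) * qbinom q (i - int k + int r) (int (n - 1 - j))
              * q powi (int ((n - j - 1) choose 2) - int k * int ((n - j) choose 2)
                         + int (n - j - 1) * (int k * int n - i + 1)))
              (monom 1 k * qfib q k (k * j + r))) = qfib_lincomb q k r n i"
    unfolding qfib_lincomb_def qfib_coeff_def by (intro sum.cong) simp_all
  thus ?thesis using qfib_lincomb_eq_shifted[OF assms] unfolding qfib_shifted_def by simp
qed

lemma qfib_alternating_sum_eq:
  assumes "1 \<le> k" "r < k" "1 \<le> n"
  shows "(\<Sum>j=0..n. smult ((-1) ^ j * qbinom q (int r + 1) (int j)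
            * q powi (int (n * k * j) + int (j choose 2) - int k * int ((j + 1) choose 2)))
            (qfib q k (k * (n - j) + r)))
         = monom 1 (r + 1) * qfib q k (k * n - 1)"
    (is "?S = _")
proof -
  have exponent:
    "int (j choose 2) - int k * int (Suc j choose 2) + int j * (int k * int (Suc n) - (int k + 1) + 1)
      = int (n * k * j) + int (j choose 2) - int k * int ((j + 1) choose 2)" for j
    by (simp add: algebra_simps)
  have "int k + 1 - int k + int r = int r + 1" by simp
  hence coeff: "qfib_coeff q k r (Suc n) (int k + 1) j = (-1) ^ j * qbinom q (int r + 1) (int j)
            * q powi (int (n * k * j) + int (j choose 2) - int k * int ((j + 1) choose 2))" for j
    unfolding qfib_coeff_def exponent by (simp only:)
  have "monom 1 k * ?S = (\<Sum>j=0..n.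
      smult (qfib_coeff q k r (Suc n) (int k + 1) j) (monom 1 k * qfib q k (k * (n - j) + r)))"
    unfolding coeff by (simp add: sum_distrib_left)
  also have "\<dots> = (\<Sum>j=0..n.
      smult (qfib_coeff q k r (Suc n) (int k + 1) (n - j)) (monom 1 k * qfib q k (k * j + r)))"
    by (subst sum.atLeastAtMost_rev) (intro sum.cong; simp)
  also have "\<dots> = qfib_lincomb q k r (Suc n) (int k + 1)"
    unfolding qfib_lincomb_def by (simp add: atLeast0AtMost lessThan_Suc_atMost)
  also have "\<dots> = qfib_shifted q k r (Suc n) (int k + 1)"
    using qfib_lincomb_eq_shifted[OF assms(1,2), of "Suc n" "int k + 1"] assms(3) by simp
  also have "\<dots> = monom 1 k * (monom 1 (r + 1) * qfib q k (k * n - 1))"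
  proof -
    have "1 \<le> k * n" using assms(1,3) by simp
    hence "int k * int (Suc n) - (int k + 1) = int (k * n - 1)" by (simp add: algebra_simps)
    moreover have "nat (int r + (int k + 1)) = k + (r + 1)" by simp
    ultimately show ?thesis unfolding qfib_shifted_def nat_int by (simp add: mult_monom mult.assoc)
  qed
  finally show ?thesis by simp
qed

end

lemma qq_power: "qq ^ l = Fract (monom 1 l) 1"
  by (induction l) (simp_all add: qq_def One_fract_def monom_altdef one_pCons)

lemma qq_nonzero: "qq \<noteq> 0"
  by (simp add: qq_def Zero_fract_def eq_fract)

lemma qq_power_neq_1: "0 < t \<Longrightarrow> qq ^ t \<noteq> 1"
  by (auto simp: qq_power One_fract_def eq_fract monom_eq_1_iff)

theorem lemma11:
  fixes k r n :: nat
  assumes "k \<ge> 1" and "r < k" and "n \<ge> 1"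
  shows "((\<Sum>j=0..n. smult ((-1) ^ j * qbinom qq (int r + 1) (int j)
            * qq powi (int (n * k * j) + int (j choose 2) - int k * int ((j + 1) choose 2)))
            (qfib qq k (k * (n - j) + r)))
         = monom 1 (r + 1) * qfib qq k (k * n - 1))
    \<and> (\<forall>i::int. 0 < i \<and> i < int k + int n \<longrightarrow>
           (\<Sum>j=0..n-1. smult ((-1) ^ (n - 1 - j) * qbinom qq (i - int k + int r) (int (n - 1 - j))
              * qq powi (int ((n - j - 1) choose 2) - int k * int ((n - j) choose 2)
                         + int (n - j - 1) * (int k * int n - i + 1)))
              (monom 1 k * qfib qq k (k * j + r)))
           = monom 1 (nat (int r + i)) * qfib qq k (nat (int k * int n - i)))"
  using qfib_alternating_sum_eq[OF qq_nonzero qq_power_neq_1 assms]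
    qfib_sum_eq_monom_mult_qfib[OF qq_nonzero qq_power_neq_1 assms]
  by blast

end
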